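(* Let $A,B,C$ be subspaces. If $A\perp^{*}B$ and $A\cap B\subsetneq C\subset B$, then $A\perp^{*}C$.
   Context: Let $V$ be a vector space over a field with a nondegenerate symmetric bilinear form $\xi$ having no isotropic vectors. (Affine) subspaces are sets $p+W$ with $W$ a linear subspace. $X_1\sqcup X_2$ denotes the least subspace containing $X_1\cup X_2$. For nonempty subspaces $X,Y$: $X\perp Y$ iff $\xi(b-a,d-c)=0$ for all $a,b\in X$, $c,d\in Y$; $X\perp_x Y$ iff $X\perp Y$ and $X\cap Y\neq\emptyset$. $X_1\perp^{\circ}X_2$ iff there are a point $q\in X_1\cap X_2$ and subspaces $Z_1,Z_2$ with $q\in Z_1,Z_2$, $Z_i\perp_x X_1\cap X_2$, $Z_1\perp_x Z_2$, and $(X_1\cap X_2)\sqcup Z_i=X_i$ for $i=1,2$. $X_1\perp^{*}X_2$ iff $X_1\perp^{\circ}X_2$ and $X_1\cap X_2$ is different from both $X_1$ and $X_2$. *)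

theory Defs
  imports Main "HOL.Vector_Spaces"
begin

definition sym_bilinear :: "('k::field \<Rightarrow> 'v::ab_group_add \<Rightarrow> 'v) \<Rightarrow> ('v \<Rightarrow> 'v \<Rightarrow> 'k) \<Rightarrow> bool" where
  "sym_bilinear scale xi \<longleftrightarrow>
     (\<forall>x y z. xi (x + y) z = xi x z + xi y z) \<and>
     (\<forall>c x y. xi (scale c x) y = c * xi x y) \<and>
     (\<forall>x y. xi x y = xi y x)"

definition nondegenerate :: "('v::ab_group_add \<Rightarrow> 'v \<Rightarrow> 'k::field) \<Rightarrow> bool" where
  "nondegenerate xi \<longleftrightarrow> (\<forall>x. (\<forall>y. xi x y = 0) \<longrightarrow> x = 0)"

definition no_isotropic :: "('v::ab_group_add \<Rightarrow> 'v \<Rightarrow> 'k::field) \<Rightarrow> bool" where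
  "no_isotropic xi \<longleftrightarrow> (\<forall>x. xi x x = 0 \<longrightarrow> x = 0)"

text \<open>(Affine) subspaces: sets p + W with W a linear subspace (hence nonempty).\<close>
definition aff_sub :: "('k::field \<Rightarrow> 'v::ab_group_add \<Rightarrow> 'v) \<Rightarrow> 'v set \<Rightarrow> bool" where
  "aff_sub scale X \<longleftrightarrow> (\<exists>p W. module.subspace scale W \<and> X = (\<lambda>w. p + w) ` W)"

definition join :: "('k::field \<Rightarrow> 'v::ab_group_add \<Rightarrow> 'v) \<Rightarrow> 'v set \<Rightarrow> 'v set \<Rightarrow> 'v set" where
  "join scale X Y = \<Inter>{Z. aff_sub scale Z \<and> X \<union> Y \<subseteq> Z}"

definition perp :: "('k::field \<Rightarrow> 'v::ab_group_add \<Rightarrow> 'v) \<Rightarrow> ('v \<Rightarrow> 'v \<Rightarrow> 'k) \<Rightarrow> 'v set \<Rightarrow> 'v set \<Rightarrow> bool" where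
  "perp scale xi X Y \<longleftrightarrow> aff_sub scale X \<and> aff_sub scale Y \<and>
     (\<forall>a\<in>X. \<forall>b\<in>X. \<forall>c\<in>Y. \<forall>d\<in>Y. xi (b - a) (d - c) = 0)"

definition perp_x :: "('k::field \<Rightarrow> 'v::ab_group_add \<Rightarrow> 'v) \<Rightarrow> ('v \<Rightarrow> 'v \<Rightarrow> 'k) \<Rightarrow> 'v set \<Rightarrow> 'v set \<Rightarrow> bool" where
  "perp_x scale xi X Y \<longleftrightarrow> perp scale xi X Y \<and> X \<inter> Y \<noteq> {}"

definition perp_circ :: "('k::field \<Rightarrow> 'v::ab_group_add \<Rightarrow> 'v) \<Rightarrow> ('v \<Rightarrow> 'v \<Rightarrow> 'k) \<Rightarrow> 'v set \<Rightarrow> 'v set \<Rightarrow> bool" where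
  "perp_circ scale xi X1 X2 \<longleftrightarrow>
     (\<exists>q Z1 Z2. q \<in> X1 \<inter> X2 \<and> q \<in> Z1 \<and> q \<in> Z2 \<and>
        perp_x scale xi Z1 (X1 \<inter> X2) \<and> perp_x scale xi Z2 (X1 \<inter> X2) \<and>
        perp_x scale xi Z1 Z2 \<and>
        join scale (X1 \<inter> X2) Z1 = X1 \<and> join scale (X1 \<inter> X2) Z2 = X2)"

definition perp_star :: "('k::field \<Rightarrow> 'v::ab_group_add \<Rightarrow> 'v) \<Rightarrow> ('v \<Rightarrow> 'v \<Rightarrow> 'k) \<Rightarrow> 'v set \<Rightarrow> 'v set \<Rightarrow> bool" where
  "perp_star scale xi X1 X2 \<longleftrightarrow> perp_circ scale xi X1 X2 \<and> X1 \<inter> X2 \<noteq> X1 \<and> X1 \<inter> X2 \<noteq> X2"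

end

theory Submission
  imports Defs
begin

text \<open>Only the incidence structure matters: if \<open>Z\<^sub>1, Z\<^sub>2\<close> witness \<open>A \<perp>\<^sup>\<circ> B\<close> at a point
  \<open>q \<in> A \<inter> B\<close>, then \<open>Z\<^sub>1\<close> and \<open>C \<inter> Z\<^sub>2\<close> witness \<open>A \<perp>\<^sup>\<circ> C\<close>. Perpendicularity passes to the
  smaller subspace \<open>C \<inter> Z\<^sub>2\<close>, and \<open>(A \<inter> B) \<squnion> (C \<inter> Z\<^sub>2) = C\<close> is the modular law, since
  \<open>A \<inter> B \<subseteq> C \<subseteq> (A \<inter> B) \<squnion> Z\<^sub>2\<close>.\<close>

lemma translate_directions_eq:
  fixes S :: "'v::ab_group_add set"
  shows "(\<lambda>v. q + v) ` {v. q + v \<in> S} = S"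
proof
  show "S \<subseteq> (\<lambda>v. q + v) ` {v. q + v \<in> S}"
    by (rule subsetI, rule_tac x = "x - q" in image_eqI) simp_all
qed auto

lemma perp_x_mono:
  assumes "perp_x scale xi X Y" "aff_sub scale X'" "aff_sub scale Y'"
    and "X' \<subseteq> X" "Y' \<subseteq> Y" "X' \<inter> Y' \<noteq> {}"
  shows "perp_x scale xi X' Y'"
  using assms unfolding perp_x_def perp_def by blast

context vector_space
begin

lemma aff_sub_iff_subspace_directions:
  assumes "q \<in> S"
  shows "aff_sub scale S \<longleftrightarrow> subspace {v. q + v \<in> S}"
proof
  assume "aff_sub scale S"
  then obtain p W where W: "subspace W" and S: "S = (\<lambda>w. p + w) ` W"
    unfolding aff_sub_def by blast
  with assms obtain w0 where w0: "w0 \<in> W" "q = p + w0" by blast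
  have "{v. q + v \<in> S} = (\<lambda>w. w - w0) ` W"
  proof safe
    fix v assume "q + v \<in> S"
    then obtain w where "w \<in> W" "q + v = p + w" using S by blast
    then show "v \<in> (\<lambda>w. w - w0) ` W"
      using w0 by (auto simp: algebra_simps intro!: image_eqI[of _ _ w])
  next
    fix w assume "w \<in> W"
    then show "q + (w - w0) \<in> S" using S w0 by (auto simp: algebra_simps)
  qed
  also have "\<dots> = W"
  proof
    show "(\<lambda>w. w - w0) ` W \<subseteq> W" using W w0(1) subspace_diff by blast
    show "W \<subseteq> (\<lambda>w. w - w0) ` W"
      by (rule subsetI, rule_tac x = "x + w0" in image_eqI) (simp_all add: W w0(1) subspace_add)
  qed
  finally show "subspace {v. q + v \<in> S}" using W by simp
next
  assume "subspace {v. q + v \<in> S}"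
  then show "aff_sub scale S"
    unfolding aff_sub_def using translate_directions_eq by metis
qed

lemma aff_sub_Int:
  assumes "aff_sub scale X" "aff_sub scale Y" "q \<in> X" "q \<in> Y"
  shows "aff_sub scale (X \<inter> Y)"
proof -
  have "{v. q + v \<in> X \<inter> Y} = {v. q + v \<in> X} \<inter> {v. q + v \<in> Y}" by auto
  then show ?thesis
    using assms aff_sub_iff_subspace_directions subspace_inter by simp
qed

lemma join_eq_translate_sums:
  assumes "aff_sub scale X" "aff_sub scale Y" "q \<in> X" "q \<in> Y"
  shows "join scale X Y = (\<lambda>w. q + w) ` {u + v | u v. q + u \<in> X \<and> q + v \<in> Y}"
    (is "_ = (\<lambda>w. q + w) ` ?T")
proof
  have "subspace ?T"
    using subspace_sums assms aff_sub_iff_subspace_directions by force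
  then have "aff_sub scale ((\<lambda>w. q + w) ` ?T)"
    unfolding aff_sub_def by blast
  moreover have "X \<union> Y \<subseteq> (\<lambda>w. q + w) ` ?T"
  proof
    fix x assume "x \<in> X \<union> Y"
    then have "x - q \<in> ?T" using assms by (auto intro: exI[of _ "x - q"] exI[of _ 0])
    then show "x \<in> (\<lambda>w. q + w) ` ?T" by (rule_tac x = "x - q" in image_eqI) simp_all
  qed
  ultimately show "join scale X Y \<subseteq> (\<lambda>w. q + w) ` ?T"
    unfolding join_def by blast
next
  show "(\<lambda>w. q + w) ` ?T \<subseteq> join scale X Y"
    unfolding join_def
  proof (rule Inter_greatest, safe)
    fix Z u v assume Z: "aff_sub scale Z" "X \<union> Y \<subseteq> Z" and uv: "q + u \<in> X" "q + v \<in> Y"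
    then have "subspace {v. q + v \<in> Z}"
      using assms aff_sub_iff_subspace_directions by blast
    with Z uv show "q + (u + v) \<in> Z" using subspace_add by blast
  qed
qed

lemma join_Int_modular:
  assumes "aff_sub scale D" "aff_sub scale Z" "aff_sub scale C"
    and "q \<in> D" "q \<in> Z" "D \<subseteq> C" "C \<subseteq> join scale D Z"
  shows "join scale D (C \<inter> Z) = C"
proof -
  have qC: "q \<in> C" using assms by blast
  have C: "subspace {v. q + v \<in> C}"
    using assms(3) qC aff_sub_iff_subspace_directions by blast
  have "{u + v | u v. q + u \<in> D \<and> q + v \<in> C \<inter> Z} = {v. q + v \<in> C}"
  proof safe
    fix u v assume "q + u \<in> D" "q + v \<in> C"
    then show "q + (u + v) \<in> C" using C assms(6) subspace_add by blast
  next
    fix c assume c: "q + c \<in> C"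
    then obtain u v where uv: "c = u + v" "q + u \<in> D" "q + v \<in> Z"
      using assms(7) join_eq_translate_sums[OF assms(1,2,4,5)] by auto
    have "v = c - u" using uv(1) by simp
    then have "q + v \<in> C" using C c uv(2) assms(6) subspace_diff by blast
    with uv show "\<exists>u v. c = u + v \<and> q + u \<in> D \<and> q + v \<in> C \<inter> Z" by blast
  qed
  then show ?thesis
    using join_eq_translate_sums[OF assms(1) aff_sub_Int[OF assms(3,2) qC assms(5)]] assms(4,5) qC
      translate_directions_eq by simp
qed

end

theorem proposition3p3:
  fixes scale :: "'k::field \<Rightarrow> 'v::ab_group_add \<Rightarrow> 'v"
    and xi :: "'v \<Rightarrow> 'v \<Rightarrow> 'k"
    and A B C :: "'v set"
  assumes "vector_space scale"
    and "sym_bilinear scale xi"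
    and "nondegenerate xi"
    and "no_isotropic xi"
    and "aff_sub scale A" and "aff_sub scale B" and "aff_sub scale C"
    and "perp_star scale xi A B"
    and "A \<inter> B \<subset> C" and "C \<subseteq> B"
  shows "perp_star scale xi A C"
proof -
  interpret vector_space scale by (rule assms(1))
  define D where "D = A \<inter> B"
  have AC: "A \<inter> C = D" using assms(9,10) D_def by blast
  obtain q Z1 Z2 where q: "q \<in> D" "q \<in> Z1" "q \<in> Z2"
    and Z1: "perp_x scale xi Z1 D" "join scale D Z1 = A"
    and Z2: "perp_x scale xi Z2 D" "join scale D Z2 = B"
    and Z12: "perp_x scale xi Z1 Z2" and "D \<noteq> A"
    using assms(8) unfolding perp_star_def perp_circ_def D_def by blast
  have affD: "aff_sub scale D" and affZ1: "aff_sub scale Z1" and affZ2: "aff_sub scale Z2"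
    using Z1 Z2 unfolding perp_x_def perp_def by auto
  have qC: "q \<in> C" using q(1) assms(9) D_def by blast
  have affZ: "aff_sub scale (C \<inter> Z2)" using aff_sub_Int assms(7) affZ2 qC q(3) by blast
  have Z: "perp_x scale xi (C \<inter> Z2) D"
    by (rule perp_x_mono[OF Z2(1) affZ affD]) (use q qC in auto)
  have Z1Z: "perp_x scale xi Z1 (C \<inter> Z2)"
    by (rule perp_x_mono[OF Z12 affZ1 affZ]) (use q qC in auto)
  have joinZ: "join scale D (C \<inter> Z2) = C"
    by (rule join_Int_modular[OF affD affZ2 assms(7) q(1,3)]) (use assms(9,10) Z2(2) D_def in auto)
  have "perp_circ scale xi A C"
    unfolding perp_circ_def AC using q(1,2,3) qC Z1 Z Z1Z joinZ
    by (intro exI[of _ q] exI[of _ Z1] exI[of _ "C \<inter> Z2"]) simp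
  moreover have "D \<noteq> C" using assms(9) D_def by blast
  ultimately show ?thesis
    unfolding perp_star_def AC using \<open>D \<noteq> A\<close> by blast
qed

end
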